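(* Let $(M,g)$ be a locally symmetric space, $p\in M$, $\mathfrak p=T_pM$, and $\mathfrak h=\mathrm{span}\{R(X,Y)\mid X,Y\in\mathfrak p\}\subset\mathrm{End}(\mathfrak p)$ (curvature at $p$), a Lie algebra under the commutator. Let $B_{\mathfrak h}$ be the bilinear form on $\mathfrak h$ determined by $B_{\mathfrak h}(R(X,Y),R(Z,W))=g(R(X,Y)Z,W)$. Then $B_{\mathfrak h}$ is a well-defined, symmetric, non-degenerate, ad-invariant bilinear form, so $(\mathfrak h,B_{\mathfrak h})$ is a metrized Lie algebra; and if $C_{\mathfrak h}\in\mathfrak h\otimes\mathfrak h$ is its Casimir tensor and $\rho:\mathfrak h\hookrightarrow\mathrm{End}(\mathfrak p)$ is the inclusion representation, then $(\rho\otimes\rho)(C_{\mathfrak h})=\hat R_p$ in $\mathrm{End}(\mathfrak p)\otimes\mathrm{End}(\mathfrak p)$. Consequently the weight system $w_R$ of $(M,g)$ coincides with the Lie algebra weight system $w_{\rho(C_{\mathfrak h})}$; i.e. weight systems from symmetric spaces are of Lie algebra type.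
   Context: A locally symmetric space is a connected pseudo-Riemannian manifold $(M,g)$ with Levi-Civita connection $\nabla$ and curvature $R(X,Y)Z=\nabla_X\nabla_YZ-\nabla_Y\nabla_XZ-\nabla_{[X,Y]}Z$ satisfying $\nabla R=0$. In a frame $R(e_a,e_b)e_c=R^d_{abc}e_d$, $g^{ab}$ is the inverse metric, repeated indices summed, and $\hat R_p=\sum\hat R^{bd}_{ac}(e_b\otimes e^a)\otimes(e_d\otimes e^c)$ with $\hat R^{bd}_{ac}=g^{bx}R^d_{axc}$. A metrized Lie algebra is a Lie algebra with a non-degenerate symmetric bilinear form $B$ satisfying $B([z,x],y)+B(x,[z,y])=0$; its Casimir tensor $C\in\mathfrak h\otimes\mathfrak h$ is the inverse of $B$, i.e. $C=\sum_i x_i\otimes x^i$ for a basis $(x_i)$ and the $B$-dual basis $(x^i)$. For a symmetric tensor $H\in\mathrm{End}(V)\otimes\mathrm{End}(V)$, $w_H$ is the function on chord diagrams (oriented circle with $n$ chords) obtained by placing a copy of $H$ on each chord (first factor at one endpoint, second at the other) and contracting indices around the oriented circle: the upper (outgoing) index at each endpoint is contracted with the lower (incoming) index of the next endpoint along the circle. $w_R(D)$ denotes the (constant in $p$) value $w_{\hat R_p}(D)$. *)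

theory Defs
  imports "HOL-Analysis.Analysis"
begin

(* The tangent space p = T_pM is modelled as real^'n (standard basis e_a = axis a 1);
   endomorphisms of p are matrices real^'n^'n, with  (A *v e_a) $ b = A $ b $ a. *)

definition metric :: "real^'n^'n \<Rightarrow> real^'n \<Rightarrow> real^'n \<Rightarrow> real" where
  "metric G X Y = X \<bullet> (G *v Y)"

definition comm :: "real^'n^'n \<Rightarrow> real^'n^'n \<Rightarrow> real^'n^'n" where
  "comm A B = A ** B - B ** A"

(* Pointwise data at p of a locally symmetric pseudo-Riemannian manifold:
   g non-degenerate symmetric; R the curvature (R X Y = R(X,Y) as endomorphism),
   with the algebraic curvature identities and the identity R(X,Y).R = 0,
   which is what nabla R = 0 gives at p (Ricci identity). *)
definition locally_symmetric_curvature ::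
  "real^'n^'n \<Rightarrow> (real^'n \<Rightarrow> real^'n \<Rightarrow> real^'n^'n) \<Rightarrow> bool" where
  "locally_symmetric_curvature G Rm \<longleftrightarrow>
     transpose G = G \<and> invertible G \<and> bilinear Rm \<and>
     (\<forall>X Y. Rm X Y = - Rm Y X) \<and>
     (\<forall>X Y Z. Rm X Y *v Z + Rm Y Z *v X + Rm Z X *v Y = 0) \<and>
     (\<forall>X Y Z W. metric G (Rm X Y *v Z) W = - metric G Z (Rm X Y *v W)) \<and>
     (\<forall>X Y Z W. comm (Rm X Y) (Rm Z W) = Rm (Rm X Y *v Z) W + Rm Z (Rm X Y *v W))"

definition curv_algebra :: "(real^'n \<Rightarrow> real^'n \<Rightarrow> real^'n^'n) \<Rightarrow> (real^'n^'n) set" where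
  "curv_algebra Rm = span {Rm X Y | X Y. True}"

definition bilinear_on :: "'a::real_vector set \<Rightarrow> ('a \<Rightarrow> 'a \<Rightarrow> real) \<Rightarrow> bool" where
  "bilinear_on S B \<longleftrightarrow>
     (\<forall>x\<in>S. \<forall>y\<in>S. \<forall>z\<in>S. \<forall>a b.
        B (a *\<^sub>R x + b *\<^sub>R y) z = a * B x z + b * B y z \<and>
        B z (a *\<^sub>R x + b *\<^sub>R y) = a * B z x + b * B z y)"

(* (x_i)_{i in I} a basis of h and (y_i) its B-dual basis;
   the Casimir tensor is then sum_i x_i (x) y_i *)
definition casimir_basis ::
  "(real^'n^'n) set \<Rightarrow> (real^'n^'n \<Rightarrow> real^'n^'n \<Rightarrow> real) \<Rightarrow> nat set
     \<Rightarrow> (nat \<Rightarrow> real^'n^'n) \<Rightarrow> (nat \<Rightarrow> real^'n^'n) \<Rightarrow> bool" where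
  "casimir_basis h B I x y \<longleftrightarrow>
     finite I \<and> inj_on x I \<and> independent (x ` I) \<and> span (x ` I) = h \<and>
     (\<forall>i\<in>I. y i \<in> h) \<and>
     (\<forall>i\<in>I. \<forall>j\<in>I. B (x i) (y j) = (if i = j then 1 else 0))"

(* Tensors in End(p) (x) End(p) as coefficient functions T b a d c of
   (e_b (x) e^a) (x) (e_d (x) e^c). *)

definition rho_tensor ::
  "nat set \<Rightarrow> (nat \<Rightarrow> real^'n^'n) \<Rightarrow> (nat \<Rightarrow> real^'n^'n) \<Rightarrow> 'n \<Rightarrow> 'n \<Rightarrow> 'n \<Rightarrow> 'n \<Rightarrow> real" where
  "rho_tensor I x y b a d c = (\<Sum>i\<in>I. x i $ b $ a * y i $ d $ c)"

definition hat_R ::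
  "real^'n^'n \<Rightarrow> (real^'n \<Rightarrow> real^'n \<Rightarrow> real^'n^'n) \<Rightarrow> 'n \<Rightarrow> 'n \<Rightarrow> 'n \<Rightarrow> 'n \<Rightarrow> real" where
  "hat_R G Rm b a d c = (\<Sum>x\<in>UNIV. matrix_inv G $ b $ x * Rm (axis a 1) (axis x 1) $ d $ c)"

(* chord diagram with m chords: 2m points 0..2m-1 in cyclic order on the oriented circle,
   chords given by a fixed-point-free involution D *)
definition chord_diagram :: "nat \<Rightarrow> (nat \<Rightarrow> nat) \<Rightarrow> bool" where
  "chord_diagram m D \<longleftrightarrow> (\<forall>i<2*m. D i < 2*m \<and> D i \<noteq> i \<and> D (D i) = i)"

(* w_H(D): s k is the index carried by the arc from point k to point k+1, i.e. the upper
   index at k and the lower index at k+1; the lower index at k is s (k-1 mod 2m).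
   A copy of H on each chord {i, D i} with i < D i, first factor at i. *)
definition weight_system ::
  "('n::finite \<Rightarrow> 'n \<Rightarrow> 'n \<Rightarrow> 'n \<Rightarrow> real) \<Rightarrow> nat \<Rightarrow> (nat \<Rightarrow> nat) \<Rightarrow> real" where
  "weight_system H m D =
     (let prev = (\<lambda>k. (k + 2*m - 1) mod (2*m)) in
      \<Sum>s \<in> {..<2*m} \<rightarrow>\<^sub>E (UNIV :: 'n set).
        \<Prod>i \<in> {i. i < 2*m \<and> i < D i}. H (s i) (s (prev i)) (s (D i)) (s (prev (D i))))"

end

theory Submission
  imports Defs
begin

(* The two antisymmetries and the first Bianchi identity give pair symmetry
   g(R(X,Y)Z, W) = g(R(Z,W)X, Y). Writing R(c) = sum c^ab R(e_a, e_b) for coefficient tensors c,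
   the pairing of g(R(c) -, -) with d is therefore symmetric in c and d, so it only depends on
   R(c) and R(d) and descends to a symmetric form B on h with B(u, R(Z,W)) = g(uZ, W).
   Non-degeneracy: the R(Z, W) test every entry of u. Ad-invariance reduces on generators to h
   acting g-skewly on p and by derivations on R, the pointwise content of nabla R = 0. Finally, for
   B-dual bases every w in h equals sum_i B(w, y_i) x_i; for w = R(e_c, G^-1 e_d) the coefficient
   B(w, y_i) is the (d,c) entry of y_i, and pair symmetry identifies the (b,a) entry of w with
   hat R^bd_ac. *)

lemma curvature_pair_symmetry:
  fixes f :: "'v \<Rightarrow> 'v \<Rightarrow> 'v \<Rightarrow> 'v \<Rightarrow> real"
  assumes antisym_12: "\<And>X Y Z W. f X Y Z W = - f Y X Z W"
    and antisym_34: "\<And>X Y Z W. f X Y Z W = - f X Y W Z"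
    and bianchi: "\<And>X Y Z W. f X Y Z W + f Y Z X W + f Z X Y W = 0"
  shows "f X Y Z W = f Z W X Y"
  using bianchi[of X Y Z W] bianchi[of Y Z W X] bianchi[of Z W X Y] bianchi[of W X Y Z]
  by (smt (verit) antisym_12 antisym_34)

lemma metric_commute:
  assumes "transpose G = G"
  shows "metric G X Y = metric G Y X"
  using assms unfolding metric_def
  by (metis dot_lmul_matrix inner_commute transpose_transpose vector_transpose_matrix)

lemma linear_metric_left: "linear (\<lambda>X. metric G X W)"
  unfolding metric_def by (rule linearI) (simp_all add: inner_add_left)

lemma linear_metric_right: "linear (metric G X)"
  unfolding metric_def
  by (rule linearI) (simp_all add: inner_add_right matrix_vector_right_distrib matrix_vector_mult_scaleR)

lemma linear_matrix_vector_mult_left: "linear (\<lambda>A::real^'n^'m. A *v v)"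
  by (rule linearI) (simp_all add: matrix_vector_mult_add_rdistrib scaleR_matrix_vector_assoc)

lemma linear_metric_matrix_left: "linear (\<lambda>A. metric G (A *v Z) W)"
  using linear_compose[OF linear_matrix_vector_mult_left linear_metric_left] by (simp add: o_def)

lemma linear_metric_matrix_right: "linear (\<lambda>A. metric G Z (A *v W))"
  using linear_compose[OF linear_matrix_vector_mult_left linear_metric_right] by (simp add: o_def)

lemma bilinear_metric_matrix: "bilinear (\<lambda>X Y. metric G (A *v X) Y)"
  by (simp add: bilinear_def linear_metric_right
      linear_compose[OF matrix_vector_mul_linear linear_metric_left, unfolded o_def])

lemma matrix_vector_mult_axis: "((A::real^'n^'m) *v axis a 1) $ b = A $ b $ a"
  by (simp add: matrix_vector_mult_basis column_def)

lemma bilinear_axis_expansion: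
  fixes h :: "real^'n \<Rightarrow> real^'m \<Rightarrow> 'c::real_vector"
  assumes "bilinear h"
  shows "h X Y = (\<Sum>a\<in>UNIV. \<Sum>b\<in>UNIV. (X$a * Y$b) *\<^sub>R h (axis a 1) (axis b 1))"
proof -
  have "h X Y = h (\<Sum>a\<in>UNIV. X$a *\<^sub>R axis a 1) (\<Sum>b\<in>UNIV. Y$b *\<^sub>R axis b 1)"
    using basis_expansion[of X] basis_expansion[of Y] by (simp add: scalar_mult_eq_scaleR)
  also have "\<dots> = (\<Sum>(a,b)\<in>UNIV \<times> UNIV. h (X$a *\<^sub>R axis a 1) (Y$b *\<^sub>R axis b 1))"
    by (rule bilinear_sum[OF assms])
  also have "\<dots> = (\<Sum>a\<in>UNIV. \<Sum>b\<in>UNIV. (X$a * Y$b) *\<^sub>R h (axis a 1) (axis b 1))"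
    by (simp add: sum.cartesian_product bilinear_lmul[OF assms] bilinear_rmul[OF assms] mult.commute)
  finally show ?thesis .
qed

lemma bilinear_comm: "bilinear comm"
  unfolding bilinear_def comm_def
  by (auto intro!: linearI simp: matrix_matrix_mult_def vec_eq_iff sum.distrib sum_distrib_left algebra_simps)

lemma matrix_inv_invertible:
  assumes "invertible A"
  shows "A ** matrix_inv A = mat 1" and "matrix_inv A ** A = mat 1"
  using assms unfolding invertible_def matrix_inv_def by (metis (mono_tags, lifting) someI_ex)+

lemma transpose_matrix_inv_symmetric:
  fixes G :: "real^'n^'n"
  assumes "transpose G = G" and "invertible G"
  shows "transpose (matrix_inv G) = matrix_inv G"
proof -
  have "transpose (matrix_inv G) ** G = transpose (G ** matrix_inv G)"
    by (simp only: matrix_transpose_mul assms(1))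
  then have "transpose (matrix_inv G) ** G = mat 1"
    by (simp add: matrix_inv_invertible(1)[OF assms(2)])
  then show ?thesis
    by (metis matrix_inv_invertible(1)[OF assms(2)] matrix_mul_assoc matrix_mul_lid matrix_mul_rid)
qed

lemma metric_matrix_inv_right:
  assumes "invertible G"
  shows "metric G X (matrix_inv G *v Y) = X \<bullet> Y"
  unfolding metric_def by (simp add: matrix_vector_mul_assoc matrix_inv_invertible[OF assms])

lemma metric_matrix_inv_axis:
  assumes "invertible G"
  shows "metric G V (matrix_inv G *v axis k 1) = V $ k"
  by (simp add: metric_matrix_inv_right[OF assms] cart_eq_inner_axis)

lemma bilinear_on_add:
  assumes "bilinear_on V B" and "x \<in> V" "y \<in> V" "z \<in> V"
  shows "B (x + y) z = B x z + B y z" and "B z (x + y) = B z x + B z y"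
  using assms unfolding bilinear_on_def by (metis mult_1 scaleR_one)+

lemma bilinear_on_scale:
  assumes "bilinear_on V B" and "x \<in> V" "z \<in> V"
  shows "B (c *\<^sub>R x) z = c * B x z" and "B z (c *\<^sub>R x) = c * B z x"
  using assms unfolding bilinear_on_def by (metis add.right_neutral mult_zero_left scaleR_zero_left)+

lemma bilinear_on_eq_on_span:
  assumes B1: "bilinear_on (span S) B1" and B2: "bilinear_on (span S) B2"
    and eq: "\<And>s t. s \<in> S \<Longrightarrow> t \<in> S \<Longrightarrow> B1 s t = B2 s t"
    and u: "u \<in> span S" and v: "v \<in> span S"
  shows "B1 u v = B2 u v"
proof -
  have zero: "B 0 w = 0" "B w 0 = 0" if "bilinear_on (span S) B" "w \<in> span S" for B w
    using bilinear_on_scale[OF that(1) that(2) that(2), of 0] by simp_all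
  have left: "subspace {u \<in> span S. B1 u w = B2 u w}" if w: "w \<in> span S" for w
    by (rule subspaceI)
       (simp_all add: w span_zero span_add span_scale zero[OF B1] zero[OF B2]
         bilinear_on_add(1)[OF B1 _ _ w] bilinear_on_add(1)[OF B2 _ _ w]
         bilinear_on_scale(1)[OF B1 _ w] bilinear_on_scale(1)[OF B2 _ w])
  have right: "subspace {v \<in> span S. B1 w v = B2 w v}" if w: "w \<in> span S" for w
    by (rule subspaceI)
       (simp_all add: w span_zero span_add span_scale zero[OF B1] zero[OF B2]
         bilinear_on_add(2)[OF B1 _ _ w] bilinear_on_add(2)[OF B2 _ _ w]
         bilinear_on_scale(2)[OF B1 _ w] bilinear_on_scale(2)[OF B2 _ w])
  have "B1 u t = B2 u t" if "t \<in> S" for t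
    using span_induct[OF u left[OF span_base[OF that]]] eq[OF _ that] by (simp add: span_base)
  then show ?thesis
    using span_induct[OF v right[OF u]] by (simp add: span_base)
qed

lemma casimir_basis_expansion:
  assumes cb: "casimir_basis V B I x y" and lin: "\<And>v. linear (\<lambda>u. B u v)" and w: "w \<in> V"
  shows "w = (\<Sum>i\<in>I. B w (y i) *\<^sub>R x i)"
proof -
  have fin: "finite I" and inj: "inj_on x I" and sp: "span (x ` I) = V"
    and dual: "\<And>i j. i \<in> I \<Longrightarrow> j \<in> I \<Longrightarrow> B (x i) (y j) = (if i = j then 1 else 0)"
    using cb unfolding casimir_basis_def by auto
  obtain c where "w = (\<Sum>v\<in>x ` I. c v *\<^sub>R v)"
    using w span_finite[of "x ` I"] fin sp by auto
  then have wc: "w = (\<Sum>i\<in>I. c (x i) *\<^sub>R x i)"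
    by (simp add: sum.reindex[OF inj])
  have coeff: "B w (y j) = c (x j)" if j: "j \<in> I" for j
  proof -
    have "B w (y j) = (\<Sum>i\<in>I. c (x i) * (if i = j then 1 else 0))"
      unfolding wc by (simp add: linear_sum[OF lin] linear_scale[OF lin] dual j)
    also have "\<dots> = c (x j)" using fin j by (simp add: if_distrib cong: if_cong)
    finally show ?thesis .
  qed
  then have "(\<Sum>i\<in>I. B w (y i) *\<^sub>R x i) = (\<Sum>i\<in>I. c (x i) *\<^sub>R x i)"
    by (intro sum.cong refl) simp
  with wc show ?thesis by simp
qed

lemma sum_swap_nested:
  "(\<Sum>a\<in>A. \<Sum>b\<in>B. \<Sum>x\<in>C. \<Sum>y\<in>D. f a b x y) = (\<Sum>x\<in>C. \<Sum>y\<in>D. \<Sum>a\<in>A. \<Sum>b\<in>B. f a b x y)"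
proof -
  have "(\<Sum>a\<in>A. \<Sum>b\<in>B. \<Sum>x\<in>C. \<Sum>y\<in>D. f a b x y) = (\<Sum>a\<in>A. \<Sum>x\<in>C. \<Sum>b\<in>B. \<Sum>y\<in>D. f a b x y)"
    by (rule sum.cong[OF refl], rule sum.swap)
  also have "\<dots> = (\<Sum>x\<in>C. \<Sum>a\<in>A. \<Sum>b\<in>B. \<Sum>y\<in>D. f a b x y)"
    by (rule sum.swap)
  also have "\<dots> = (\<Sum>x\<in>C. \<Sum>y\<in>D. \<Sum>a\<in>A. \<Sum>b\<in>B. f a b x y)"
    by (rule sum.cong[OF refl], subst sum.swap, rule sum.cong[OF refl], rule sum.swap)
  finally show ?thesis .
qed

definition metric_pairing :: "real^'n^'n \<Rightarrow> real^'n^'n \<Rightarrow> real^'n^'n \<Rightarrow> real" where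
  "metric_pairing G A c = (\<Sum>a\<in>UNIV. \<Sum>b\<in>UNIV. c $ a $ b * metric G (A *v axis a 1) (axis b 1))"

definition outer_product :: "real^'n \<Rightarrow> real^'n \<Rightarrow> real^'n^'n" where
  "outer_product X Y = (\<chi> a b. X $ a * Y $ b)"

lemma metric_pairing_outer_product: "metric_pairing G A (outer_product Z W) = metric G (A *v Z) W"
  using bilinear_axis_expansion[OF bilinear_metric_matrix, of G A Z W]
  by (simp add: metric_pairing_def outer_product_def)

lemma linear_metric_pairing_left: "linear (\<lambda>A. metric_pairing G A c)"
  unfolding metric_pairing_def
  by (rule linearI)
     (simp_all add: linear_add[OF linear_metric_left] linear_scale[OF linear_metric_left]
       matrix_vector_mult_add_rdistrib scaleR_matrix_vector_assoc[symmetric]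
       sum.distrib sum_distrib_left algebra_simps)

lemma linear_metric_pairing_right: "linear (metric_pairing G A)"
  unfolding metric_pairing_def
  by (rule linearI) (simp_all add: sum.distrib sum_distrib_left algebra_simps)

locale locally_symmetric_point =
  fixes G :: "real^'n^'n" and Rm :: "real^'n \<Rightarrow> real^'n \<Rightarrow> real^'n^'n"
  assumes locally_symmetric: "locally_symmetric_curvature G Rm"
begin

lemma metric_symmetric: "transpose G = G"
  and metric_invertible: "invertible G"
  and bilinear_Rm: "bilinear Rm"
  and Rm_antisym: "Rm X Y = - Rm Y X"
  and Rm_bianchi: "Rm X Y *v Z + Rm Y Z *v X + Rm Z X *v Y = 0"
  and Rm_skew: "metric G (Rm X Y *v Z) W = - metric G Z (Rm X Y *v W)"
  and Rm_derivation: "comm (Rm X Y) (Rm Z W) = Rm (Rm X Y *v Z) W + Rm Z (Rm X Y *v W)"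
  using locally_symmetric unfolding locally_symmetric_curvature_def by blast+

lemma metric_Rm_pair_symmetry: "metric G (Rm X Y *v Z) W = metric G (Rm Z W *v X) Y"
proof (rule curvature_pair_symmetry[where f = "\<lambda>X Y Z W. metric G (Rm X Y *v Z) W"])
  fix X Y Z W
  show "metric G (Rm X Y *v Z) W = - metric G (Rm Y X *v Z) W"
    using Rm_antisym[of X Y] linear_neg[OF linear_metric_matrix_left] by simp
  show "metric G (Rm X Y *v Z) W = - metric G (Rm X Y *v W) Z"
    using Rm_skew[of X Y Z W] metric_commute[OF metric_symmetric, of Z] by simp
  show "metric G (Rm X Y *v Z) W + metric G (Rm Y Z *v X) W + metric G (Rm Z X *v Y) W = 0"
    using arg_cong[OF Rm_bianchi[of X Y Z], of "\<lambda>V. metric G V W"]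
    by (simp add: linear_add[OF linear_metric_left] linear_0[OF linear_metric_left])
qed

lemma Rm_in_curv_algebra: "Rm X Y \<in> curv_algebra Rm"
  unfolding curv_algebra_def by (rule span_base) blast

lemma linear_eq_0_on_curv_algebra:
  assumes "linear f" and "\<And>X Y. f (Rm X Y) = 0" and "u \<in> curv_algebra Rm"
  shows "f u = 0"
  by (rule linear_eq_0_on_span[OF assms(1) _ assms(3)[unfolded curv_algebra_def]]) (auto simp: assms(2))

lemma curv_algebra_skew:
  assumes "u \<in> curv_algebra Rm"
  shows "metric G (u *v Z) W = - metric G Z (u *v W)"
proof -
  have "linear (\<lambda>u. metric G (u *v Z) W + metric G Z (u *v W))"
    by (rule linear_compose_add[OF linear_metric_matrix_left linear_metric_matrix_right])
  then have "metric G (u *v Z) W + metric G Z (u *v W) = 0"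
    by (rule linear_eq_0_on_curv_algebra[OF _ _ assms]) (simp add: Rm_skew)
  then show ?thesis
    by (simp add: eq_neg_iff_add_eq_0)
qed

lemma curv_algebra_derivation:
  assumes "u \<in> curv_algebra Rm"
  shows "comm u (Rm Z W) = Rm (u *v Z) W + Rm Z (u *v W)"
proof -
  have "linear (\<lambda>A. Rm (A *v Z) W)" "linear (\<lambda>A. Rm Z (A *v W))" "linear (\<lambda>A. comm A (Rm Z W))"
    using linear_compose[OF linear_matrix_vector_mult_left] bilinear_Rm bilinear_comm
    unfolding bilinear_def by (auto simp: o_def)
  then have "linear (\<lambda>A. comm A (Rm Z W) - (Rm (A *v Z) W + Rm Z (A *v W)))"
    by (intro linear_compose_sub linear_compose_add)
  then show ?thesis
    using linear_eq_0_on_curv_algebra assms Rm_derivation by fastforce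
qed

lemma comm_in_curv_algebra:
  assumes "u \<in> curv_algebra Rm" and "v \<in> curv_algebra Rm"
  shows "comm u v \<in> curv_algebra Rm"
proof -
  have lin: "linear (comm u)"
    using bilinear_comm unfolding bilinear_def by blast
  have "comm u ` {Rm X Y |X Y. True} \<subseteq> curv_algebra Rm"
    using curv_algebra_derivation[OF assms(1)] Rm_in_curv_algebra
    unfolding curv_algebra_def by (auto intro!: span_add)
  then have "span (comm u ` {Rm X Y |X Y. True}) \<subseteq> curv_algebra Rm"
    unfolding curv_algebra_def by (simp add: span_minimal)
  then show ?thesis
    using linear_spans_image[OF lin, of "curv_algebra Rm" "{Rm X Y |X Y. True}"] assms(2)
    unfolding curv_algebra_def by blast
qed

definition curv_combination :: "real^'n^'n \<Rightarrow> real^'n^'n" where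
  "curv_combination c = (\<Sum>a\<in>UNIV. \<Sum>b\<in>UNIV. c $ a $ b *\<^sub>R Rm (axis a 1) (axis b 1))"

lemma linear_curv_combination: "linear curv_combination"
  unfolding curv_combination_def
  by (rule linearI) (simp_all add: sum.distrib scaleR_add_left scaleR_sum_right)

lemma Rm_eq_curv_combination: "Rm X Y = curv_combination (outer_product X Y)"
  using bilinear_axis_expansion[OF bilinear_Rm, of X Y]
  unfolding curv_combination_def outer_product_def by simp

lemma curv_algebra_eq_range: "curv_algebra Rm = range curv_combination"
proof
  have "subspace (range curv_combination)"
    using linear_subspace_image[OF linear_curv_combination subspace_UNIV] .
  then show "curv_algebra Rm \<subseteq> range curv_combination"
    unfolding curv_algebra_def by (rule span_minimal[rotated]) (auto simp: Rm_eq_curv_combination)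
  show "range curv_combination \<subseteq> curv_algebra Rm"
  proof (rule image_subsetI)
    show "curv_combination c \<in> curv_algebra Rm" for c
      unfolding curv_combination_def curv_algebra_def by (intro span_sum span_scale span_base) blast
  qed
qed

lemma metric_curv_combination:
  "metric G (curv_combination c *v Z) W
    = (\<Sum>a\<in>UNIV. \<Sum>b\<in>UNIV. c $ a $ b * metric G (Rm (axis a 1) (axis b 1) *v Z) W)"
  unfolding curv_combination_def
  by (simp add: linear_sum[OF linear_metric_matrix_left] linear_scale[OF linear_metric_matrix_left])

lemma metric_pairing_curv_combination_commute:
  "metric_pairing G (curv_combination c) d = metric_pairing G (curv_combination d) c"
proof -
  let ?P = "\<lambda>a b x y. metric G (Rm (axis x 1) (axis y 1) *v axis a 1) (axis b 1)"
  have expand: "metric_pairing G (curv_combination c) d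
      = (\<Sum>a\<in>UNIV. \<Sum>b\<in>UNIV. \<Sum>x\<in>UNIV. \<Sum>y\<in>UNIV. d $ a $ b * c $ x $ y * ?P a b x y)" for c d
    by (simp add: metric_pairing_def metric_curv_combination sum_distrib_left mult.assoc)
  have "metric_pairing G (curv_combination d) c
      = (\<Sum>x\<in>UNIV. \<Sum>y\<in>UNIV. \<Sum>a\<in>UNIV. \<Sum>b\<in>UNIV. c $ a $ b * d $ x $ y * ?P a b x y)"
    unfolding expand by (rule sum_swap_nested)
  also have "\<dots> = metric_pairing G (curv_combination c) d"
    unfolding expand by (intro sum.cong refl) (subst metric_Rm_pair_symmetry, simp add: mult_ac)
  finally show ?thesis ..
qed

(* inv picks an arbitrary coefficient tensor; by pair symmetry the value does not depend on it. *)
definition curv_form :: "real^'n^'n \<Rightarrow> real^'n^'n \<Rightarrow> real" where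
  "curv_form u v = metric_pairing G u (inv curv_combination v)"

lemma curv_form_curv_combination:
  assumes "u \<in> curv_algebra Rm"
  shows "curv_form u (curv_combination c) = metric_pairing G u c"
proof -
  obtain d where u: "u = curv_combination d"
    using assms curv_algebra_eq_range by blast
  have "curv_combination (inv curv_combination (curv_combination c)) = curv_combination c"
    by (simp add: f_inv_into_f)
  then show ?thesis
    unfolding curv_form_def u by (metis metric_pairing_curv_combination_commute)
qed

lemma curv_form_Rm_right:
  assumes "u \<in> curv_algebra Rm"
  shows "curv_form u (Rm Z W) = metric G (u *v Z) W"
  using curv_form_curv_combination[OF assms] by (simp add: Rm_eq_curv_combination metric_pairing_outer_product)

lemma linear_curv_form_left: "linear (\<lambda>u. curv_form u v)"
  unfolding curv_form_def by (rule linear_metric_pairing_left)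

lemma curv_form_bilinear_on: "bilinear_on (curv_algebra Rm) curv_form"
  unfolding bilinear_on_def
proof (intro ballI allI conjI)
  fix x y z a b
  show "curv_form (a *\<^sub>R x + b *\<^sub>R y) z = a * curv_form x z + b * curv_form y z"
    by (simp add: linear_add[OF linear_curv_form_left] linear_scale[OF linear_curv_form_left])
  assume "x \<in> curv_algebra Rm" "y \<in> curv_algebra Rm" and z: "z \<in> curv_algebra Rm"
  then obtain cx cy where x: "x = curv_combination cx" and y: "y = curv_combination cy"
    unfolding curv_algebra_eq_range by blast
  have "a *\<^sub>R x + b *\<^sub>R y = curv_combination (a *\<^sub>R cx + b *\<^sub>R cy)"
    unfolding x y by (simp add: linear_add[OF linear_curv_combination] linear_scale[OF linear_curv_combination])
  then show "curv_form z (a *\<^sub>R x + b *\<^sub>R y) = a * curv_form z x + b * curv_form z y"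
    unfolding x y using z
    by (simp add: curv_form_curv_combination linear_add[OF linear_metric_pairing_right]
        linear_scale[OF linear_metric_pairing_right])
qed

lemma curv_form_commute:
  assumes "u \<in> curv_algebra Rm" and "v \<in> curv_algebra Rm"
  shows "curv_form u v = curv_form v u"
  using assms curv_algebra_eq_range curv_form_curv_combination metric_pairing_curv_combination_commute
  by auto

lemma curv_form_Rm_left:
  assumes "v \<in> curv_algebra Rm"
  shows "curv_form (Rm Z W) v = metric G (v *v Z) W"
  using curv_form_commute[OF Rm_in_curv_algebra assms] curv_form_Rm_right[OF assms] by simp

lemma curv_form_nondegenerate:
  assumes u: "u \<in> curv_algebra Rm" and zero: "\<forall>v\<in>curv_algebra Rm. curv_form u v = 0"
  shows "u = 0"
proof -
  have "u *v Z = 0" for Z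
  proof -
    have "metric G (u *v Z) (matrix_inv G *v (u *v Z)) = 0"
      using zero Rm_in_curv_algebra curv_form_Rm_right[OF u] by metis
    then show ?thesis
      by (simp add: metric_matrix_inv_right[OF metric_invertible])
  qed
  then show ?thesis by (simp add: matrix_eq)
qed

lemma curv_form_ad_invariant:
  assumes z: "z \<in> curv_algebra Rm" and u: "u \<in> curv_algebra Rm" and v: "v \<in> curv_algebra Rm"
  shows "curv_form (comm z u) v + curv_form u (comm z v) = 0"
proof -
  have zu: "comm z u \<in> curv_algebra Rm"
    using comm_in_curv_algebra[OF z u] .
  have "curv_form (Rm Z W) (comm z u) + curv_form (comm z (Rm Z W)) u = 0" for Z W
  proof -
    have "curv_form (Rm Z W) (comm z u) = metric G (z *v (u *v Z)) W - metric G (u *v (z *v Z)) W"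
      using curv_form_Rm_left[OF zu]
      by (simp add: comm_def matrix_vector_mult_diff_rdistrib matrix_vector_mul_assoc metric_def inner_diff_left)
    moreover have "curv_form (comm z (Rm Z W)) u = metric G (u *v (z *v Z)) W + metric G (u *v Z) (z *v W)"
      using curv_algebra_derivation[OF z] curv_form_Rm_left[OF u]
      by (simp add: linear_add[OF linear_curv_form_left])
    ultimately show ?thesis
      using curv_algebra_skew[OF z, of "u *v Z" W] by simp
  qed
  \<comment> \<open>with both terms moved to the first slot the expression is linear on all of End(p)\<close>
  moreover have "linear (\<lambda>v. curv_form v (comm z u) + curv_form (comm z v) u)"
    using linear_compose[OF _ linear_curv_form_left, of "comm z"] bilinear_comm
    unfolding bilinear_def by (auto simp: o_def intro!: linear_compose_add linear_curv_form_left)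
  ultimately have "curv_form v (comm z u) + curv_form (comm z v) u = 0"
    using linear_eq_0_on_curv_algebra v by blast
  then show ?thesis
    using curv_form_commute zu u v comm_in_curv_algebra[OF z v] by metis
qed

lemma curv_form_unique:
  assumes B: "bilinear_on (curv_algebra Rm) B"
    and B_Rm: "\<And>X Y Z W. B (Rm X Y) (Rm Z W) = metric G (Rm X Y *v Z) W"
    and u: "u \<in> curv_algebra Rm" and v: "v \<in> curv_algebra Rm"
  shows "B u v = curv_form u v"
  using B curv_form_bilinear_on _ u v unfolding curv_algebra_def
  by (rule bilinear_on_eq_on_span)
     (auto simp: B_Rm curv_form_Rm_right[OF Rm_in_curv_algebra])

lemma hat_R_eq_Rm_entry: "hat_R G Rm b a d c = Rm (axis a 1) (matrix_inv G *v axis b 1) $ d $ c"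
proof -
  have lin: "linear (Rm (axis a 1))"
    using bilinear_Rm unfolding bilinear_def by blast
  have "(matrix_inv G *v axis b 1) $ k = transpose (matrix_inv G) $ b $ k" for k
    by (simp add: matrix_vector_mult_axis transpose_def)
  then have entry: "(matrix_inv G *v axis b 1) $ k = matrix_inv G $ b $ k" for k
    by (simp only: transpose_matrix_inv_symmetric[OF metric_symmetric metric_invertible])
  have "Rm (axis a 1) (matrix_inv G *v axis b 1)
      = Rm (axis a 1) (\<Sum>k\<in>UNIV. (matrix_inv G *v axis b 1) $ k *\<^sub>R axis k 1)"
    using basis_expansion[of "matrix_inv G *v axis b 1"] by (simp add: scalar_mult_eq_scaleR)
  also have "\<dots> = (\<Sum>k\<in>UNIV. matrix_inv G $ b $ k *\<^sub>R Rm (axis a 1) (axis k 1))"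
    by (simp add: linear_sum[OF lin] linear_scale[OF lin] entry)
  finally show ?thesis
    unfolding hat_R_def by simp
qed

lemma rho_tensor_eq_hat_R:
  assumes cb: "casimir_basis (curv_algebra Rm) curv_form I x y"
  shows "rho_tensor I x y = hat_R G Rm"
proof (intro ext)
  fix b a d c
  let ?e = "\<lambda>k. matrix_inv G *v axis k 1"
  define w where "w = Rm (axis c 1) (?e d)"
  have w: "w \<in> curv_algebra Rm"
    unfolding w_def by (rule Rm_in_curv_algebra)
  have "y i $ d $ c = curv_form w (y i)" if "i \<in> I" for i
  proof -
    have "y i \<in> curv_algebra Rm" using cb that unfolding casimir_basis_def by blast
    then show ?thesis
      unfolding w_def by (simp add: curv_form_Rm_left metric_matrix_inv_axis[OF metric_invertible] matrix_vector_mult_axis)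
  qed
  then have "rho_tensor I x y b a d c = (\<Sum>i\<in>I. curv_form w (y i) *\<^sub>R x i) $ b $ a"
    unfolding rho_tensor_def by (simp add: mult.commute)
  also have "\<dots> = w $ b $ a"
    by (simp only: casimir_basis_expansion[OF cb linear_curv_form_left w, symmetric])
  also have "\<dots> = metric G (Rm (axis c 1) (?e d) *v axis a 1) (?e b)"
    unfolding w_def by (simp add: metric_matrix_inv_axis[OF metric_invertible] matrix_vector_mult_axis)
  also have "\<dots> = metric G (Rm (axis a 1) (?e b) *v axis c 1) (?e d)"
    by (rule metric_Rm_pair_symmetry)
  also have "\<dots> = hat_R G Rm b a d c"
    by (simp add: hat_R_eq_Rm_entry metric_matrix_inv_axis[OF metric_invertible] matrix_vector_mult_axis)
  finally show "rho_tensor I x y b a d c = hat_R G Rm b a d c" .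
qed

end

theorem theorem6:
  fixes G :: "real^'n^'n" and Rm :: "real^'n \<Rightarrow> real^'n \<Rightarrow> real^'n^'n"
  assumes "locally_symmetric_curvature G Rm"
  shows "\<exists>B. bilinear_on (curv_algebra Rm) B
    \<and> (\<forall>X Y Z W. B (Rm X Y) (Rm Z W) = metric G (Rm X Y *v Z) W)
    \<and> (\<forall>B'. bilinear_on (curv_algebra Rm) B'
            \<and> (\<forall>X Y Z W. B' (Rm X Y) (Rm Z W) = metric G (Rm X Y *v Z) W)
          \<longrightarrow> (\<forall>u\<in>curv_algebra Rm. \<forall>v\<in>curv_algebra Rm. B' u v = B u v))
    \<and> (\<forall>u\<in>curv_algebra Rm. \<forall>v\<in>curv_algebra Rm. comm u v \<in> curv_algebra Rm)
    \<and> (\<forall>u\<in>curv_algebra Rm. \<forall>v\<in>curv_algebra Rm. B u v = B v u)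
    \<and> (\<forall>u\<in>curv_algebra Rm. (\<forall>v\<in>curv_algebra Rm. B u v = 0) \<longrightarrow> u = 0)
    \<and> (\<forall>z\<in>curv_algebra Rm. \<forall>u\<in>curv_algebra Rm. \<forall>v\<in>curv_algebra Rm.
          B (comm z u) v + B u (comm z v) = 0)
    \<and> (\<forall>I x y. casimir_basis (curv_algebra Rm) B I x y \<longrightarrow>
          rho_tensor I x y = hat_R G Rm
          \<and> (\<forall>m D. chord_diagram m D \<longrightarrow>
                weight_system (hat_R G Rm) m D = weight_system (rho_tensor I x y) m D))"
proof -
  interpret locally_symmetric_point G Rm
    using assms by unfold_locales
  show ?thesis
  proof (intro exI[of _ curv_form] conjI allI impI ballI)
    show "bilinear_on (curv_algebra Rm) curv_form"
      by (rule curv_form_bilinear_on)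
    show "curv_form (Rm X Y) (Rm Z W) = metric G (Rm X Y *v Z) W" for X Y Z W
      by (rule curv_form_Rm_right[OF Rm_in_curv_algebra])
    show "B' u v = curv_form u v"
      if "bilinear_on (curv_algebra Rm) B' \<and> (\<forall>X Y Z W. B' (Rm X Y) (Rm Z W) = metric G (Rm X Y *v Z) W)"
        and "u \<in> curv_algebra Rm" and "v \<in> curv_algebra Rm" for B' u v
      using that by (blast intro: curv_form_unique)
    show "comm u v \<in> curv_algebra Rm" if "u \<in> curv_algebra Rm" "v \<in> curv_algebra Rm" for u v
      using that by (rule comm_in_curv_algebra)
    show "curv_form u v = curv_form v u" if "u \<in> curv_algebra Rm" "v \<in> curv_algebra Rm" for u v
      using that by (rule curv_form_commute)
    show "u = 0" if "u \<in> curv_algebra Rm" "\<forall>v\<in>curv_algebra Rm. curv_form u v = 0" for u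
      using that by (rule curv_form_nondegenerate)
    show "curv_form (comm z u) v + curv_form u (comm z v) = 0"
      if "z \<in> curv_algebra Rm" "u \<in> curv_algebra Rm" "v \<in> curv_algebra Rm" for z u v
      using that by (rule curv_form_ad_invariant)
    show "rho_tensor I x y = hat_R G Rm" if "casimir_basis (curv_algebra Rm) curv_form I x y" for I x y
      using that by (rule rho_tensor_eq_hat_R)
    then show "weight_system (hat_R G Rm) m D = weight_system (rho_tensor I x y) m D"
      if "casimir_basis (curv_algebra Rm) curv_form I x y" for I x y m D
      using that by simp
  qed
qed

end
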